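(* Let $H$ be the Horn matrix. Let $A$ be a real symmetric $5\times 5$ matrix with $\langle A, H\rangle = 0$ and $A \in \partial\mathcal{CP}_5\cap \mathcal{DNN}_5^\circ$. Then $A$ has a factorization $A=BB^{\mathsf T}$ where \[ B = \begin{pmatrix} 1& 0&0& y_4& y_5+1 \\ y_1+1 & 1& 0 &0& y_5\\ y_1 & y_2+1 & 1 & 0& 0\\ 0 & y_2& y_3+1&1& 0\\ 0&0&y_3&y_4+1&1 \end{pmatrix} \operatorname{diag}(z_1,z_2,z_3,z_4,z_5) \] for some positive real numbers $y_1,\dots,y_5,z_1,\dots,z_5$.
   Context: $Sym_5$ is the space of real symmetric $5\times 5$ matrices with inner product $\langle A,B\rangle=\operatorname{trace}(A^{\mathsf T}B)$. $\mathcal{CP}_5$ is the cone of matrices $A=BB^{\mathsf T}$ with $B$ a $5\times k$ matrix with nonnegative entries (some $k$); $\mathcal{DNN}_5$ is the cone of positive semidefinite $5\times 5$ matrices with nonnegative entries. $\partial$ denotes boundary and ${}^\circ$ interior (Euclidean topology in $Sym_5$). The Horn matrix is \[H=\begin{pmatrix} 1 & -1 &1& 1& -1 \\ -1 & 1& -1 &1& 1\\ 1 & -1 & 1 & -1 & 1\\ 1 & 1& -1&1& -1\\ -1&1&1&-1&1\end{pmatrix}.\] *)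

theory Defs
  imports "HOL-Analysis.Analysis"
begin

type_synonym mat5 = "real^5^5"

text \<open>Indices of type 5 are written 1,2,3,4,5 (vector [a1,...,a5] \$ k = ak).\<close>

definition Sym5 :: "mat5 set" where
  "Sym5 = {A. transpose A = A}"

definition frob :: "mat5 \<Rightarrow> mat5 \<Rightarrow> real" where
  "frob A B = trace (transpose A ** B)"

text \<open>Completely positive: A = B B^T with B a nonnegative 5 x k matrix,
  columns of B given by b 0, ..., b (k-1).\<close>
definition CP5 :: "mat5 set" where
  "CP5 = {A. \<exists>(k::nat) (b::nat \<Rightarrow> real^5).
              (\<forall>i<k. \<forall>r. 0 \<le> b i $ r) \<and>
              (\<forall>r s. A $ r $ s = (\<Sum>i<k. b i $ r * b i $ s))}"

definition DNN5 :: "mat5 set" where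
  "DNN5 = {A. transpose A = A \<and> (\<forall>x. 0 \<le> x \<bullet> (A *v x)) \<and> (\<forall>r s. 0 \<le> A $ r $ s)}"

definition SymTop :: "mat5 topology" where
  "SymTop = subtopology euclidean Sym5"

definition Horn :: mat5 where
  "Horn = vector [vector [1, -1, 1, 1, -1],
                  vector [-1, 1, -1, 1, 1],
                  vector [1, -1, 1, -1, 1],
                  vector [1, 1, -1, 1, -1],
                  vector [-1, 1, 1, -1, 1]]"

definition Bmat :: "real \<Rightarrow> real \<Rightarrow> real \<Rightarrow> real \<Rightarrow> real \<Rightarrow> mat5" where
  "Bmat y1 y2 y3 y4 y5 = vector [vector [1, 0, 0, y4, y5 + 1],
                                 vector [y1 + 1, 1, 0, 0, y5],
                                 vector [y1, y2 + 1, 1, 0, 0],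
                                 vector [0, y2, y3 + 1, 1, 0],
                                 vector [0, 0, y3, y4 + 1, 1]]"

definition diag5 :: "real \<Rightarrow> real \<Rightarrow> real \<Rightarrow> real \<Rightarrow> real \<Rightarrow> mat5" where
  "diag5 z1 z2 z3 z4 z5 = vector [vector [z1, 0, 0, 0, 0],
                                  vector [0, z2, 0, 0, 0],
                                  vector [0, 0, z3, 0, 0],
                                  vector [0, 0, 0, z4, 0],
                                  vector [0, 0, 0, 0, z5]]"

end

theory Submission
  imports Defs
begin

text \<open>
  Since \<open>\<C>\<P>\<^sub>5\<close> is closed, \<open>A = \<Sum>\<^sub>i b\<^sub>i b\<^sub>i\<^sup>T\<close> with \<open>b\<^sub>i \<ge> 0\<close>.  The Horn form is nonnegative
  on the orthant, so \<open>\<langle>A, H\<rangle> = \<Sum>\<^sub>i b\<^sub>i\<^sup>T H b\<^sub>i = 0\<close> makes every \<open>b\<^sub>i\<close> one of its zeros, i.e.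
  a nonnegative combination of two consecutive vectors \<open>u\<^sub>j = e\<^sub>j + e\<^sub>j\<^sub>+\<^sub>1\<close> (\<open>edge_vec j\<close>,
  indices mod 5).  Hence \<open>A\<close> is
  \<open>\<Sum>\<^sub>j \<alpha>\<^sub>j u\<^sub>j u\<^sub>j\<^sup>T + \<beta>\<^sub>j (u\<^sub>j u\<^sub>j\<^sub>+\<^sub>1\<^sup>T + u\<^sub>j\<^sub>+\<^sub>1 u\<^sub>j\<^sup>T) + \<gamma>\<^sub>j u\<^sub>j\<^sub>+\<^sub>1 u\<^sub>j\<^sub>+\<^sub>1\<^sup>T\<close>
  (\<open>horn_face_matrix \<alpha> \<beta> \<gamma>\<close>) with \<open>\<beta>\<^sub>j\<^sup>2 \<le> \<alpha>\<^sub>j \<gamma>\<^sub>j\<close>, and \<open>\<beta>\<^sub>j = A\<^sub>j\<^sub>,\<^sub>j\<^sub>+\<^sub>2 > 0\<close> because \<open>A\<close> lies in the interior of \<open>\<D>\<N>\<N>\<^sub>5\<close>.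
  Only the sums \<open>\<alpha>\<^sub>j\<^sub>+\<^sub>1 + \<gamma>\<^sub>j\<close> are seen by \<open>A\<close>: a fixed point of the cyclic recurrence
  \<open>p\<^sub>j\<^sub>+\<^sub>1 = \<alpha>\<^sub>j\<^sub>+\<^sub>1 + \<gamma>\<^sub>j - \<beta>\<^sub>j\<^sup>2 / p\<^sub>j\<close> (Brouwer on an interval) replaces \<open>(\<alpha>\<^sub>j, \<gamma>\<^sub>j)\<close> by
  \<open>(p\<^sub>j, \<beta>\<^sub>j\<^sup>2 / p\<^sub>j)\<close>, which turns every term into \<open>p\<^sub>j v\<^sub>j v\<^sub>j\<^sup>T\<close> with
  \<open>v\<^sub>j = u\<^sub>j + (\<beta>\<^sub>j / p\<^sub>j) u\<^sub>j\<^sub>+\<^sub>1\<close>, the \<open>j\<close>-th column of \<open>Bmat\<close>.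
\<close>

lemma UNIV_5_from: "(UNIV :: 5 set) = {j, j+1, j+2, j+3, j+4}"
proof -
  have "card {j::5, j+1, j+2, j+3, j+4} = CARD(5)" by simp
  from card_subset_eq[OF finite_class.finite_UNIV subset_UNIV this] show ?thesis by simp
qed

lemma sum_UNIV_5_from:
  fixes f :: "5 \<Rightarrow> 'a::comm_monoid_add"
  shows "(\<Sum>i\<in>UNIV. f i) = f j + f (j+1) + f (j+2) + f (j+3) + f (j+4)"
  by (subst UNIV_5_from[of j]) (simp add: algebra_simps)

lemma all_5: "(\<forall>i::5. P i) \<longleftrightarrow> P 0 \<and> P 1 \<and> P 2 \<and> P 3 \<and> P 4"
  using UNIV_5_from[of 0] by (metis UNIV_I add_0 empty_iff insert_iff)

text \<open>The simplifier does not reduce numerals of the index type \<open>5\<close> modulo 5 on its own.\<close>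

lemma numerals_mod_5 [simp]: "(5::5) = 0" "(6::5) = 1" "(7::5) = 2" "(8::5) = 3" "(9::5) = 4"
  by simp_all

lemma vector_5_nth [simp]:
  "(vector [a, b, c, d, e] :: 'a::zero^5) $ 1 = a"
  "(vector [a, b, c, d, e] :: 'a::zero^5) $ 2 = b"
  "(vector [a, b, c, d, e] :: 'a::zero^5) $ 3 = c"
  "(vector [a, b, c, d, e] :: 'a::zero^5) $ 4 = d"
  "(vector [a, b, c, d, e] :: 'a::zero^5) $ 0 = e"
proof -
  have "(vector [a, b, c, d, e] :: 'a^5) $ 5 = e"
    unfolding vector_def by simp
  then show "(vector [a, b, c, d, e] :: 'a^5) $ 0 = e"
    by simp
qed (simp_all add: vector_def)

lemma ex_cyclic_ascent: "\<exists>j. (x::'a::linorder^5) $ (j+3) \<le> x $ (j+4)"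
proof -
  have "Max (range (($) x)) \<in> range (($) x)"
    by (rule Max_in) simp_all
  then obtain m where m: "x $ m = Max (range (($) x))"
    by (metis imageE)
  have "m - 4 + 3 = m - 1" "m - 4 + 4 = m"
    by (simp_all add: algebra_simps)
  then show ?thesis
    using m by (intro exI[of _ "m - 4"]) simp
qed

definition outer :: "real^'n \<Rightarrow> real^'n \<Rightarrow> real^'n^'n" where
  "outer x y = (\<chi> r s. x$r * y$s)"

lemma outer_nth [simp]: "outer x y $ r $ s = x$r * y$s"
  by (simp add: outer_def)

lemma outer_scaleR_self: "outer (c *\<^sub>R x) (c *\<^sub>R x) = c\<^sup>2 *\<^sub>R outer x x"
  by (simp add: vec_eq_iff power2_eq_square algebra_simps)

lemma matrix_mul_transpose_eq_sum_outer:
  fixes X :: "real^'m^'n"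
  shows "X ** transpose X = (\<Sum>k\<in>UNIV. outer (column k X) (column k X))"
  by (simp add: vec_eq_iff matrix_matrix_mult_def transpose_def column_def)

lemma convex_cone_sum_lessThan:
  fixes k :: nat
  assumes "convex_cone S" "\<And>i. i < k \<Longrightarrow> f i \<in> S"
  shows "(\<Sum>i<k. f i) \<in> S"
  using assms(2)
  by (induction k) (simp_all add: convex_cone_contains_0[OF assms(1)] convex_cone_add[OF assms(1)])

lemma CP5_eq_sums_outer:
  "CP5 = {A. \<exists>(k::nat) b. (\<forall>i<k. \<forall>r. 0 \<le> b i $ r) \<and> A = (\<Sum>i<k. outer (b i) (b i))}"
  unfolding CP5_def vec_eq_iff by simp

lemma outer_self_in_CP5: "\<forall>r. 0 \<le> b $ r \<Longrightarrow> outer b b \<in> CP5"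
  unfolding CP5_def by (intro CollectI exI[of _ "1::nat"] exI[of _ "\<lambda>_. b"]) simp

lemma CP5_add:
  assumes "A \<in> CP5" "B \<in> CP5"
  shows "A + B \<in> CP5"
proof -
  obtain k l :: nat and b c where
    b: "\<forall>i<k. \<forall>r. 0 \<le> b i $ r" "A = (\<Sum>i<k. outer (b i) (b i))" and
    c: "\<forall>i<l. \<forall>r. 0 \<le> c i $ r" "B = (\<Sum>i<l. outer (c i) (c i))"
    using assms unfolding CP5_eq_sums_outer by blast
  define d where "d i = (if i < k then b i else c (i - k))" for i
  have "(\<Sum>i<k + n. outer (d i) (d i)) = A + (\<Sum>i<n. outer (c i) (c i))" for n
  proof (induction n)
    case 0
    show ?case
      unfolding b(2) d_def by simp
  next
    case (Suc n)
    then show ?case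
      by (simp add: d_def)
  qed
  then have "A + B = (\<Sum>i<k + l. outer (d i) (d i))"
    by (simp add: c(2))
  moreover have "\<forall>i<k + l. \<forall>r. 0 \<le> d i $ r"
    using b(1) c(1) by (simp add: d_def)
  ultimately show ?thesis
    unfolding CP5_eq_sums_outer by (intro CollectI exI[of _ "k + l"] exI[of _ d]) simp
qed

lemma CP5_scaleR:
  assumes "A \<in> CP5" "0 \<le> t"
  shows "t *\<^sub>R A \<in> CP5"
proof -
  obtain k :: nat and b where b: "\<forall>i<k. \<forall>r. 0 \<le> b i $ r" "A = (\<Sum>i<k. outer (b i) (b i))"
    using assms(1) unfolding CP5_eq_sums_outer by blast
  have "t *\<^sub>R A = (\<Sum>i<k. outer (sqrt t *\<^sub>R b i) (sqrt t *\<^sub>R b i))"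
    using assms(2) by (simp add: b(2) outer_scaleR_self scaleR_sum_right)
  moreover have "\<forall>i<k. \<forall>r. 0 \<le> (sqrt t *\<^sub>R b i) $ r"
    using b(1) assms(2) by simp
  ultimately show ?thesis
    unfolding CP5_eq_sums_outer by (intro CollectI exI[of _ k] exI[of _ "\<lambda>i. sqrt t *\<^sub>R b i"]) simp
qed

lemma convex_cone_CP5: "convex_cone CP5"
proof -
  have "0 \<in> CP5"
    unfolding CP5_def by (intro CollectI exI[of _ "0::nat"]) simp
  then show ?thesis
    unfolding convex_cone_iff by (simp add: CP5_add CP5_scaleR)
qed

definition CP5_generators :: "mat5 set" where
  "CP5_generators = (\<lambda>b. outer b b) ` ({b. \<forall>r. 0 \<le> b $ r} \<inter> sphere 0 1)"

lemma CP5_eq_convex_cone_hull: "CP5 = convex_cone hull CP5_generators"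
proof
  have "CP5_generators \<subseteq> CP5"
    unfolding CP5_generators_def using outer_self_in_CP5 by blast
  then show "convex_cone hull CP5_generators \<subseteq> CP5"
    by (intro hull_minimal convex_cone_CP5)
next
  have "outer b b \<in> convex_cone hull CP5_generators" if "\<forall>r. 0 \<le> b $ r" for b
  proof (cases "b = 0")
    case True
    then have "outer b b = 0"
      by (simp add: vec_eq_iff)
    then show ?thesis
      by (simp add: convex_cone_hull_contains_0)
  next
    case False
    let ?u = "b /\<^sub>R norm b"
    have "outer ?u ?u \<in> CP5_generators"
      using that False unfolding CP5_generators_def by auto
    moreover have "outer b b = (norm b)\<^sup>2 *\<^sub>R outer ?u ?u"
      using False by (simp add: outer_scaleR_self flip: power_mult_distrib)
    ultimately show ?thesis
      by (metis convex_cone_hull_mul hull_inc zero_le_power2)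
  qed
  then show "CP5 \<subseteq> convex_cone hull CP5_generators"
    unfolding CP5_eq_sums_outer
    by (auto intro!: convex_cone_sum_lessThan convex_cone_convex_cone_hull)
qed

lemma closed_CP5: "closed CP5"
proof -
  have "compact ({b::real^5. \<forall>r. 0 \<le> b $ r} \<inter> sphere 0 1)"
    by (intro closed_Int_compact closed_Collect_all closed_Collect_le continuous_intros) simp
  moreover have "continuous_on UNIV (\<lambda>b::real^5. outer b b)"
    unfolding outer_def by (intro continuous_intros)
  ultimately have "compact CP5_generators"
    unfolding CP5_generators_def by (meson compact_continuous_image continuous_on_subset subset_UNIV)
  have "mat 1 \<bullet> outer b b = (norm b)\<^sup>2" for b :: "real^5"
    by (simp add: inner_vec_def mat_def power2_norm_eq_inner if_distrib[of "\<lambda>t. t * _"] cong: if_cong)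
  then have "CP5_generators \<subseteq> {M. mat 1 \<bullet> M = 1}"
    unfolding CP5_generators_def by auto
  then have "convex hull CP5_generators \<subseteq> {M. mat 1 \<bullet> M = 1}"
    by (simp add: convex_hyperplane hull_minimal)
  then have "0 \<notin> convex hull CP5_generators"
    by auto
  moreover have "axis 1 1 \<in> {b::real^5. \<forall>r. 0 \<le> b $ r} \<inter> sphere 0 1"
    using norm_axis_1[of "1::5"] by (auto simp: axis_def)
  then have "CP5_generators \<noteq> {}"
    unfolding CP5_generators_def by blast
  ultimately show ?thesis
    using \<open>compact CP5_generators\<close>
    by (simp add: CP5_eq_convex_cone_hull convex_cone_hull_separate_nonempty
        closed_conic_hull compact_convex_hull)
qed

lemma frob_eq_sum_entries: "frob A H = (\<Sum>r\<in>UNIV. \<Sum>s\<in>UNIV. A$r$s * H$r$s)"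
proof -
  have "frob A H = (\<Sum>s\<in>UNIV. \<Sum>r\<in>UNIV. A$r$s * H$r$s)"
    unfolding frob_def trace_def matrix_matrix_mult_def transpose_def by simp
  also have "\<dots> = (\<Sum>r\<in>UNIV. \<Sum>s\<in>UNIV. A$r$s * H$r$s)"
    by (rule sum.swap)
  finally show ?thesis .
qed

lemma frob_outer: "frob (outer x x) H = x \<bullet> (H *v x)"
  unfolding frob_eq_sum_entries inner_vec_def matrix_vector_mult_def
  by (simp add: sum_distrib_left mult_ac)

lemma frob_sum_left: "frob (\<Sum>i\<in>I. M i) H = (\<Sum>i\<in>I. frob (M i) H)"
proof -
  have "frob (\<Sum>i\<in>I. M i) H = (\<Sum>r\<in>UNIV. \<Sum>s\<in>UNIV. \<Sum>i\<in>I. M i $ r $ s * H $ r $ s)"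
    unfolding frob_eq_sum_entries by (simp add: sum_distrib_right)
  also have "\<dots> = (\<Sum>r\<in>UNIV. \<Sum>i\<in>I. \<Sum>s\<in>UNIV. M i $ r $ s * H $ r $ s)"
    by (intro sum.cong refl sum.swap)
  also have "\<dots> = (\<Sum>i\<in>I. frob (M i) H)"
    unfolding frob_eq_sum_entries by (rule sum.swap)
  finally show ?thesis .
qed

definition horn_form :: "real^5 \<Rightarrow> real" where
  "horn_form x = x \<bullet> (Horn *v x)"

lemma horn_form_eq: "horn_form x = (\<Sum>i\<in>UNIV. x$i)\<^sup>2 - 4 * (\<Sum>i\<in>UNIV. x$i * x$(i+1))"
  unfolding horn_form_def inner_vec_def matrix_vector_mult_def Horn_def sum_UNIV_5_from[of _ 0]
  by (simp add: power2_eq_square algebra_simps)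

lemma horn_form_cyclic:
  "horn_form x = (x$j - x$(j+1) + x$(j+2) + x$(j+3) - x$(j+4))\<^sup>2
                 + 4 * x$(j+1) * x$(j+3) + 4 * x$(j+2) * (x$(j+4) - x$(j+3))"
proof -
  have idx: "j + 1 + 1 = j + 2" "j + 2 + 1 = j + 3" "j + 3 + 1 = j + 4" "j + 4 + 1 = j"
    by simp_all
  have sos: "(a + b + c + d + e)\<^sup>2 - 4 * (a * b + b * c + c * d + d * e + e * a)
      = (a - b + c + d - e)\<^sup>2 + 4 * b * d + 4 * c * (e - d)" for a b c d e :: real
    by (simp add: power2_eq_square algebra_simps)
  show ?thesis
    unfolding horn_form_eq sum_UNIV_5_from[of _ j] idx sos ..
qed

lemma horn_form_nonneg:
  assumes "\<forall>r. 0 \<le> x$r"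
  shows "0 \<le> horn_form x"
proof -
  obtain j where "x$(j+3) \<le> x$(j+4)"
    using ex_cyclic_ascent by blast
  then show ?thesis
    unfolding horn_form_cyclic[of x j] using assms by simp
qed

definition edge_vec :: "5 \<Rightarrow> real^5" where
  "edge_vec j = axis j 1 + axis (j+1) 1"

lemma eq_edge_vec_combination:
  assumes "x$(j+3) = 0" "x$(j+4) = 0" "x$(j+1) = x$j + x$(j+2)"
  shows "x = x$j *\<^sub>R edge_vec j + x$(j+2) *\<^sub>R edge_vec (j+1)"
proof -
  have "\<forall>r\<in>{j, j+1, j+2, j+3, j+4}. x$r = (x$j *\<^sub>R edge_vec j + x$(j+2) *\<^sub>R edge_vec (j+1))$r"
    using assms by (simp add: edge_vec_def axis_def)
  then show ?thesis
    unfolding vec_eq_iff UNIV_5_from[of j, symmetric] by blast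
qed

lemma horn_sos_eq_0_cases:
  fixes a b c d e :: real
  assumes "0 \<le> a" "0 \<le> b" "0 \<le> c" "0 \<le> d" "d \<le> e"
    and "(a - b + c + d - e)\<^sup>2 + 4 * b * d + 4 * c * (e - d) = 0"
  shows "(d = 0 \<and> e = 0 \<and> b = a + c) \<or> (c = 0 \<and> d = 0 \<and> a = e + b) \<or> (b = 0 \<and> c = 0 \<and> e = d + a)"
proof -
  have "0 \<le> b * d" "0 \<le> c * (e - d)"
    using assms(2-5) by simp_all
  then have "(a - b + c + d - e)\<^sup>2 = 0" "b * d = 0" "c * (e - d) = 0"
    using assms(6) zero_le_power2[of "a - b + c + d - e"] by linarith+
  then show ?thesis
    using assms(1-5) by auto
qed

lemma horn_form_eq_0:
  assumes "\<forall>r. 0 \<le> x$r" "horn_form x = 0"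
  obtains j a c where "0 \<le> a" "0 \<le> c" "x = a *\<^sub>R edge_vec j + c *\<^sub>R edge_vec (j+1)"
proof -
  obtain j where ascent: "x$(j+3) \<le> x$(j+4)"
    using ex_cyclic_ascent by blast
  have "(x$j - x$(j+1) + x$(j+2) + x$(j+3) - x$(j+4))\<^sup>2
      + 4 * x$(j+1) * x$(j+3) + 4 * x$(j+2) * (x$(j+4) - x$(j+3)) = 0"
    using assms(2) unfolding horn_form_cyclic[of x j] .
  then consider
      "x$(j+3) = 0" "x$(j+4) = 0" "x$(j+1) = x$j + x$(j+2)"
    | "x$(j+2) = 0" "x$(j+3) = 0" "x$j = x$(j+4) + x$(j+1)"
    | "x$(j+1) = 0" "x$(j+2) = 0" "x$(j+4) = x$(j+3) + x$j"
    using horn_sos_eq_0_cases[OF assms(1)[rule_format] assms(1)[rule_format] assms(1)[rule_format]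
        assms(1)[rule_format] ascent]
    by blast
  then show thesis
  proof cases
    case 1
    then show thesis
      using that[of "x$j" "x$(j+2)" j] assms(1) eq_edge_vec_combination[of x j] by simp
  next
    case 2
    have idx: "j + 4 + 1 = j" "j + 4 + 2 = j + 1" "j + 4 + 3 = j + 2" "j + 4 + 4 = j + 3"
      by simp_all
    from 2 have "x = x$(j+4) *\<^sub>R edge_vec (j+4) + x$(j+1) *\<^sub>R edge_vec j"
      by (intro eq_edge_vec_combination[of x "j+4", unfolded idx])
    then show thesis
      using that[of _ _ "j+4", unfolded idx] assms(1) by blast
  next
    case 3
    have idx: "j + 3 + 1 = j + 4" "j + 3 + 2 = j" "j + 3 + 3 = j + 1" "j + 3 + 4 = j + 2"
      by simp_all
    from 3 have "x = x$(j+3) *\<^sub>R edge_vec (j+3) + x$j *\<^sub>R edge_vec (j+4)"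
      by (intro eq_edge_vec_combination[of x "j+3", unfolded idx])
    then show thesis
      using that[of _ _ "j+3", unfolded idx] assms(1) by blast
  qed
qed

definition pair_form :: "real^'n \<Rightarrow> real^'n \<Rightarrow> real \<Rightarrow> real \<Rightarrow> real \<Rightarrow> real^'n^'n" where
  "pair_form u w a b c = a *\<^sub>R outer u u + b *\<^sub>R (outer u w + outer w u) + c *\<^sub>R outer w w"

lemma outer_pair_combination:
  "outer (a *\<^sub>R u + c *\<^sub>R w) (a *\<^sub>R u + c *\<^sub>R w) = pair_form u w (a * a) (a * c) (c * c)"
  by (simp add: pair_form_def vec_eq_iff algebra_simps)

definition horn_face_matrix :: "(5 \<Rightarrow> real) \<Rightarrow> (5 \<Rightarrow> real) \<Rightarrow> (5 \<Rightarrow> real) \<Rightarrow> mat5" where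
  "horn_face_matrix \<alpha> \<beta> \<gamma> =
     (\<Sum>j\<in>UNIV. pair_form (edge_vec j) (edge_vec (j+1)) (\<alpha> j) (\<beta> j) (\<gamma> j))"

definition horn_face :: "mat5 set" where
  "horn_face = {horn_face_matrix \<alpha> \<beta> \<gamma> | \<alpha> \<beta> \<gamma>.
                  \<forall>j. 0 \<le> \<alpha> j \<and> 0 \<le> \<gamma> j \<and> (\<beta> j)\<^sup>2 \<le> \<alpha> j * \<gamma> j}"

lemma power2_le_mult_add:
  fixes a b c a' b' c' :: real
  assumes "0 \<le> a" "0 \<le> c" "b\<^sup>2 \<le> a * c" "0 \<le> a'" "0 \<le> c'" "b'\<^sup>2 \<le> a' * c'"
  shows "(b + b')\<^sup>2 \<le> (a + a') * (c + c')"
proof -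
  have "b\<^sup>2 * b'\<^sup>2 \<le> (a * c) * (a' * c')"
    using mult_mono[OF assms(3,6)] assms by simp
  then have "(2 * (b * b'))\<^sup>2 \<le> 4 * ((a * c') * (a' * c))"
    by (simp add: power_mult_distrib mult_ac)
  also have "\<dots> = (a * c' + a' * c)\<^sup>2 - (a * c' - a' * c)\<^sup>2"
    by algebra
  also have "\<dots> \<le> (a * c' + a' * c)\<^sup>2"
    by simp
  finally have "(2 * (b * b'))\<^sup>2 \<le> (a * c' + a' * c)\<^sup>2" .
  moreover have "0 \<le> a * c' + a' * c"
    using assms by simp
  ultimately have "2 * (b * b') \<le> a * c' + a' * c"
    by (rule power2_le_imp_le)
  moreover have "(b + b')\<^sup>2 = b\<^sup>2 + 2 * (b * b') + b'\<^sup>2"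
    by algebra
  moreover have "(a + a') * (c + c') = a * c + (a * c' + a' * c) + a' * c'"
    by algebra
  ultimately show ?thesis
    using assms(3,6) by linarith
qed

lemma horn_face_matrix_add:
  "horn_face_matrix \<alpha> \<beta> \<gamma> + horn_face_matrix \<alpha>' \<beta>' \<gamma>'
     = horn_face_matrix (\<lambda>j. \<alpha> j + \<alpha>' j) (\<lambda>j. \<beta> j + \<beta>' j) (\<lambda>j. \<gamma> j + \<gamma>' j)"
  unfolding horn_face_matrix_def sum.distrib[symmetric]
  by (intro sum.cong refl) (simp add: pair_form_def algebra_simps)

lemma horn_face_matrix_scaleR:
  "t *\<^sub>R horn_face_matrix \<alpha> \<beta> \<gamma> = horn_face_matrix (\<lambda>j. t * \<alpha> j) (\<lambda>j. t * \<beta> j) (\<lambda>j. t * \<gamma> j)"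
  unfolding horn_face_matrix_def scaleR_sum_right
  by (intro sum.cong refl) (simp add: pair_form_def algebra_simps)

lemma convex_cone_horn_face: "convex_cone horn_face"
  unfolding convex_cone_iff
proof (intro conjI ballI allI impI)
  have "horn_face_matrix (\<lambda>_. 0) (\<lambda>_. 0) (\<lambda>_. 0) = 0"
    by (simp add: horn_face_matrix_def pair_form_def)
  then show "0 \<in> horn_face"
    unfolding horn_face_def by force
next
  fix A B assume "A \<in> horn_face" "B \<in> horn_face"
  then obtain \<alpha> \<beta> \<gamma> \<alpha>' \<beta>' \<gamma>' where
    A: "A = horn_face_matrix \<alpha> \<beta> \<gamma>" "\<forall>j. 0 \<le> \<alpha> j \<and> 0 \<le> \<gamma> j \<and> (\<beta> j)\<^sup>2 \<le> \<alpha> j * \<gamma> j" and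
    B: "B = horn_face_matrix \<alpha>' \<beta>' \<gamma>'" "\<forall>j. 0 \<le> \<alpha>' j \<and> 0 \<le> \<gamma>' j \<and> (\<beta>' j)\<^sup>2 \<le> \<alpha>' j * \<gamma>' j"
    unfolding horn_face_def by blast
  have "\<forall>j. 0 \<le> \<alpha> j + \<alpha>' j \<and> 0 \<le> \<gamma> j + \<gamma>' j
            \<and> (\<beta> j + \<beta>' j)\<^sup>2 \<le> (\<alpha> j + \<alpha>' j) * (\<gamma> j + \<gamma>' j)"
    using A(2) B(2) power2_le_mult_add by simp
  then show "A + B \<in> horn_face"
    unfolding horn_face_def A(1) B(1) horn_face_matrix_add by blast
next
  fix A and t :: real assume "A \<in> horn_face" "0 \<le> t"
  then obtain \<alpha> \<beta> \<gamma> where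
    A: "A = horn_face_matrix \<alpha> \<beta> \<gamma>" "\<forall>j. 0 \<le> \<alpha> j \<and> 0 \<le> \<gamma> j \<and> (\<beta> j)\<^sup>2 \<le> \<alpha> j * \<gamma> j"
    unfolding horn_face_def by blast
  have "(t * \<beta> j)\<^sup>2 \<le> (t * \<alpha> j) * (t * \<gamma> j)" for j
  proof -
    have "t\<^sup>2 * (\<beta> j)\<^sup>2 \<le> t\<^sup>2 * (\<alpha> j * \<gamma> j)"
      using A(2) by (simp add: mult_left_mono)
    then show ?thesis
      by (simp add: power_mult_distrib power2_eq_square mult_ac)
  qed
  then have "\<forall>j. 0 \<le> t * \<alpha> j \<and> 0 \<le> t * \<gamma> j \<and> (t * \<beta> j)\<^sup>2 \<le> (t * \<alpha> j) * (t * \<gamma> j)"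
    using A(2) \<open>0 \<le> t\<close> by simp
  then show "t *\<^sub>R A \<in> horn_face"
    unfolding horn_face_def A(1) horn_face_matrix_scaleR by blast
qed

lemma outer_edge_combination_in_horn_face:
  assumes "0 \<le> a" "0 \<le> c"
  shows "outer (a *\<^sub>R edge_vec j + c *\<^sub>R edge_vec (j+1)) (a *\<^sub>R edge_vec j + c *\<^sub>R edge_vec (j+1))
           \<in> horn_face"
proof -
  define at_j :: "real \<Rightarrow> 5 \<Rightarrow> real" where "at_j t k = (if k = j then t else 0)" for t k
  have "horn_face_matrix (at_j (a * a)) (at_j (a * c)) (at_j (c * c))
          = pair_form (edge_vec j) (edge_vec (j+1)) (a * a) (a * c) (c * c)"
    unfolding horn_face_matrix_def at_j_def by (simp add: pair_form_def if_distrib cong: if_cong)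
  moreover have "\<forall>k. 0 \<le> at_j (a * a) k \<and> 0 \<le> at_j (c * c) k
                     \<and> (at_j (a * c) k)\<^sup>2 \<le> at_j (a * a) k * at_j (c * c) k"
    by (simp add: at_j_def power2_eq_square)
  ultimately show ?thesis
    unfolding horn_face_def outer_pair_combination mem_Collect_eq
    by (intro exI[of _ "at_j (a * a)"] exI[of _ "at_j (a * c)"] exI[of _ "at_j (c * c)"]) simp
qed

lemma horn_face_matrix_entry: "horn_face_matrix \<alpha> \<beta> \<gamma> $ j $ (j+2) = \<beta> j"
  unfolding horn_face_matrix_def pair_form_def
  by (simp add: sum_UNIV_5_from[of _ j] edge_vec_def axis_def)

lemma horn_face_matrix_shift:
  assumes "\<And>j. \<alpha> (j+1) + \<gamma> j = \<alpha>' (j+1) + \<gamma>' j"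
  shows "horn_face_matrix \<alpha> \<beta> \<gamma> = horn_face_matrix \<alpha>' \<beta> \<gamma>'"
proof -
  have diag: "horn_face_matrix \<alpha> \<beta> \<gamma> =
      (\<Sum>j\<in>UNIV. (\<alpha> j + \<gamma> (j - 1)) *\<^sub>R outer (edge_vec j) (edge_vec j)
                 + \<beta> j *\<^sub>R (outer (edge_vec j) (edge_vec (j+1)) + outer (edge_vec (j+1)) (edge_vec j)))"
    for \<alpha> \<gamma>
  proof -
    have "(\<Sum>j\<in>UNIV. \<gamma> j *\<^sub>R outer (edge_vec (j+1)) (edge_vec (j+1)))
        = (\<Sum>j\<in>UNIV. \<gamma> (j - 1) *\<^sub>R outer (edge_vec j) (edge_vec j))"
      by (rule sum.reindex_bij_witness[of _ "\<lambda>j. j - 1" "\<lambda>j. j + 1"]) auto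
    then show ?thesis
      unfolding horn_face_matrix_def pair_form_def
      by (simp add: sum.distrib algebra_simps)
  qed
  have "\<alpha> j + \<gamma> (j - 1) = \<alpha>' j + \<gamma>' (j - 1)" for j
    using assms[of "j - 1"] by simp
  then show ?thesis
    unfolding diag by simp
qed

lemma CP5_orthogonal_Horn_in_horn_face:
  assumes "A \<in> CP5" "frob A Horn = 0"
  shows "A \<in> horn_face"
proof -
  obtain k :: nat and b where b: "\<forall>i<k. \<forall>r. 0 \<le> b i $ r" "A = (\<Sum>i<k. outer (b i) (b i))"
    using assms(1) unfolding CP5_eq_sums_outer by blast
  have "(\<Sum>i<k. horn_form (b i)) = 0"
    using assms(2) by (simp add: b(2) frob_sum_left frob_outer horn_form_def)
  moreover have "\<forall>i\<in>{..<k}. 0 \<le> horn_form (b i)"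
    using b(1) horn_form_nonneg by simp
  ultimately have zero: "horn_form (b i) = 0" if "i < k" for i
    using that sum_nonneg_eq_0_iff[of "{..<k}" "\<lambda>i. horn_form (b i)"] by simp
  have "outer (b i) (b i) \<in> horn_face" if i: "i < k" for i
  proof -
    have "\<forall>r. 0 \<le> b i $ r"
      using b(1) i by blast
    then obtain j a c where "0 \<le> a" "0 \<le> c" "b i = a *\<^sub>R edge_vec j + c *\<^sub>R edge_vec (j+1)"
      using horn_form_eq_0 zero[OF i] by metis
    then show ?thesis
      by (simp add: outer_edge_combination_in_horn_face)
  qed
  then show ?thesis
    unfolding b(2) by (rule convex_cone_sum_lessThan[OF convex_cone_horn_face])
qed

lemma cyclic_recurrence_solvable:
  fixes \<alpha> \<beta> \<gamma> :: "5 \<Rightarrow> real"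
  assumes \<alpha>_pos: "\<And>j. 0 < \<alpha> j" and \<beta>_le: "\<And>j. (\<beta> j)\<^sup>2 \<le> \<alpha> j * \<gamma> j"
  obtains p where "\<And>j. 0 < p j" "\<And>j. p (j+1) + (\<beta> j)\<^sup>2 / p j = \<alpha> (j+1) + \<gamma> j"
proof -
  \<comment> \<open>Clamping at \<open>\<alpha> j\<close> makes each step continuous on all of \<open>\<real>\<close> without changing it
      on \<open>[\<alpha> j, \<infinity>)\<close>, which the orbit never leaves.\<close>
  define f where "f j x = \<alpha> (j+1) + \<gamma> j - (\<beta> j)\<^sup>2 / max x (\<alpha> j)" for j x
  have \<gamma>_ge: "(\<beta> j)\<^sup>2 / \<alpha> j \<le> \<gamma> j" for j
    using \<beta>_le[of j] \<alpha>_pos[of j] by (simp add: divide_le_eq mult.commute)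
  have f_ge: "\<alpha> (j+1) \<le> f j x" for j x
  proof -
    have "(\<beta> j)\<^sup>2 / max x (\<alpha> j) \<le> (\<beta> j)\<^sup>2 / \<alpha> j"
      using \<alpha>_pos[of j] by (intro divide_left_mono) auto
    then show ?thesis
      using \<gamma>_ge[of j] by (simp add: f_def)
  qed
  have f_le: "f j x \<le> \<alpha> (j+1) + \<gamma> j" for j x
    using \<alpha>_pos[of j] by (simp add: f_def)
  have f_cont: "continuous_on UNIV (f j)" for j
    unfolding f_def using \<alpha>_pos[of j] by (intro continuous_intros) auto
  define F where "F = f 4 \<circ> f 3 \<circ> f 2 \<circ> f 1 \<circ> f 0"
  define I where "I = {\<alpha> 0 .. \<alpha> 0 + \<gamma> 4}"
  have "0 \<le> \<gamma> 4"
    using \<gamma>_ge[of 4] \<alpha>_pos[of 4] by (meson divide_nonneg_pos order_trans zero_le_power2)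
  then have I: "compact I" "convex I" "I \<noteq> {}"
    by (simp_all add: I_def)
  have "continuous_on UNIV F"
    unfolding F_def by (intro continuous_on_compose continuous_on_subset[OF f_cont subset_UNIV])
  then have "continuous_on I F"
    by (rule continuous_on_subset) simp
  moreover have "F \<in> I \<rightarrow> I"
    using f_ge[of 4] f_le[of 4] by (simp add: F_def I_def)
  ultimately obtain x where x: "x \<in> I" "F x = x"
    by (rule brouwer[OF I])
  define p where "p j = (if j = 0 then x else if j = 1 then f 0 x else if j = 2 then f 1 (f 0 x)
      else if j = 3 then f 2 (f 1 (f 0 x)) else f 3 (f 2 (f 1 (f 0 x))))" for j :: 5
  have "\<forall>j. \<alpha> j \<le> p j"
    unfolding all_5 p_def using x(1) f_ge[of 0] f_ge[of 1] f_ge[of 2] f_ge[of 3] by (simp add: I_def)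
  moreover have "\<forall>j. p (j+1) = f j (p j)"
    unfolding all_5 p_def using x(2) by (simp add: F_def)
  ultimately show thesis
    using \<alpha>_pos by (intro that[of p]) (auto simp: f_def max_absorb1 intro: less_le_trans)
qed

definition diag_mat :: "('n \<Rightarrow> real) \<Rightarrow> real^'n^'n" where
  "diag_mat d = (\<chi> i k. if i = k then d k else 0)"

lemma diag5_eq_diag_mat: "diag5 (z 1) (z 2) (z 3) (z 4) (z 5) = diag_mat z"
  unfolding diag5_def diag_mat_def vec_eq_iff all_5 by simp

lemma column_mul_diag_mat: "column k (X ** diag_mat d) = d k *\<^sub>R column k X"
  by (simp add: column_def matrix_matrix_mult_def diag_mat_def vec_eq_iff if_distrib[of "\<lambda>t. _ * t"] cong: if_cong)

lemma column_Bmat: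
  "column m (Bmat (y 1) (y 2) (y 3) (y 4) (y 5)) = edge_vec m + y m *\<^sub>R edge_vec (m+1)"
proof -
  have "\<forall>m r. column m (Bmat (y 1) (y 2) (y 3) (y 4) (y 5)) $ r = (edge_vec m + y m *\<^sub>R edge_vec (m+1)) $ r"
    unfolding all_5 by (simp add: Bmat_def column_def edge_vec_def axis_def)
  then show ?thesis
    by (simp add: vec_eq_iff)
qed

lemma Bmat_diag5_gram:
  fixes y z :: "5 \<Rightarrow> real"
  defines "B \<equiv> Bmat (y 1) (y 2) (y 3) (y 4) (y 5) ** diag5 (z 1) (z 2) (z 3) (z 4) (z 5)"
  shows "B ** transpose B = horn_face_matrix (\<lambda>j. (z j)\<^sup>2) (\<lambda>j. (z j)\<^sup>2 * y j) (\<lambda>j. (z j * y j)\<^sup>2)"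
proof -
  have "column j B = z j *\<^sub>R edge_vec j + (z j * y j) *\<^sub>R edge_vec (j+1)" for j
    unfolding B_def diag5_eq_diag_mat column_mul_diag_mat column_Bmat by (simp add: algebra_simps)
  then show ?thesis
    unfolding matrix_mul_transpose_eq_sum_outer horn_face_matrix_def
    by (simp add: outer_pair_combination power2_eq_square mult_ac)
qed

lemma horn_face_matrix_singular_factorization:
  fixes p \<beta> :: "5 \<Rightarrow> real"
  assumes p_pos: "\<And>j. 0 < p j" and \<beta>_pos: "\<And>j. 0 < \<beta> j"
  shows "\<exists>y1 y2 y3 y4 y5 z1 z2 z3 z4 z5 :: real.
           0 < y1 \<and> 0 < y2 \<and> 0 < y3 \<and> 0 < y4 \<and> 0 < y5 \<and>
           0 < z1 \<and> 0 < z2 \<and> 0 < z3 \<and> 0 < z4 \<and> 0 < z5 \<and>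
           (let B = Bmat y1 y2 y3 y4 y5 ** diag5 z1 z2 z3 z4 z5
            in horn_face_matrix p \<beta> (\<lambda>j. (\<beta> j)\<^sup>2 / p j) = B ** transpose B)"
proof -
  define y where "y j = \<beta> j / p j" for j
  define z where "z j = sqrt (p j)" for j
  have z_sq: "(z j)\<^sup>2 = p j" for j
    using p_pos[of j] by (simp add: z_def)
  have zy: "p j * y j = \<beta> j" "(z j * y j)\<^sup>2 = (\<beta> j)\<^sup>2 / p j" for j
  proof -
    show "p j * y j = \<beta> j"
      using p_pos[of j] by (simp add: y_def)
    have "(z j * y j)\<^sup>2 = p j * (\<beta> j / p j)\<^sup>2"
      by (simp only: y_def power_mult_distrib z_sq)
    also have "\<dots> = (\<beta> j)\<^sup>2 / p j"
      using p_pos[of j] by (simp add: power2_eq_square field_simps)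
    finally show "(z j * y j)\<^sup>2 = (\<beta> j)\<^sup>2 / p j" .
  qed
  have "horn_face_matrix p \<beta> (\<lambda>j. (\<beta> j)\<^sup>2 / p j)
      = horn_face_matrix (\<lambda>j. (z j)\<^sup>2) (\<lambda>j. (z j)\<^sup>2 * y j) (\<lambda>j. (z j * y j)\<^sup>2)"
    by (simp only: z_sq zy)
  then have gram: "horn_face_matrix p \<beta> (\<lambda>j. (\<beta> j)\<^sup>2 / p j)
      = Bmat (y 1) (y 2) (y 3) (y 4) (y 5) ** diag5 (z 1) (z 2) (z 3) (z 4) (z 5)
        ** transpose (Bmat (y 1) (y 2) (y 3) (y 4) (y 5) ** diag5 (z 1) (z 2) (z 3) (z 4) (z 5))"
    unfolding Bmat_diag5_gram .
  have "0 < y j" "0 < z j" for j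
    using p_pos \<beta>_pos by (simp_all add: y_def z_def)
  then show ?thesis
    unfolding Let_def using gram by blast
qed

lemma DNN5_interior_entries_pos:
  assumes "A \<in> Sym5" "A \<in> SymTop interior_of DNN5"
  shows "0 < A $ r $ s"
proof -
  obtain V where V: "open V" "A \<in> V" "Sym5 \<inter> V \<subseteq> DNN5"
    using assms unfolding SymTop_def interior_of_def openin_open by blast
  then obtain e where "0 < e" "ball A e \<subseteq> V"
    using open_contains_ball by blast
  define E :: mat5 where "E = (\<chi> i k. if {i, k} = {r, s} then 1 else 0)"
  define M where "M = A - (e / (2 * norm E)) *\<^sub>R E"
  have "E $ r $ s = 1"
    by (simp add: E_def)
  then have "0 < norm E"
    by (metis norm_eq_zero norm_ge_zero order_neq_le_trans zero_index zero_neq_one)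
  then have "M \<in> ball A e"
    using \<open>0 < e\<close> by (simp add: M_def dist_norm)
  moreover have "A $ k $ i = A $ i $ k" "E $ k $ i = E $ i $ k" for i k
    using assms(1) by (auto simp: Sym5_def E_def transpose_def vec_eq_iff insert_commute)
  then have "M \<in> Sym5"
    by (simp add: M_def Sym5_def transpose_def vec_eq_iff)
  ultimately have "M \<in> DNN5"
    using V \<open>ball A e \<subseteq> V\<close> by blast
  then have "0 \<le> M $ r $ s"
    by (simp add: DNN5_def)
  moreover have "0 < e / (2 * norm E)"
    using \<open>0 < norm E\<close> \<open>0 < e\<close> by simp
  ultimately show ?thesis
    using \<open>E $ r $ s = 1\<close> by (simp add: M_def)
qed

lemma SymTop_frontier_of_CP5: "SymTop frontier_of CP5 \<subseteq> CP5"
proof -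
  have "SymTop frontier_of CP5 \<subseteq> closure CP5"
    unfolding frontier_of_def SymTop_def closure_of_subtopology euclidean_closure_of
    using closure_mono[of "Sym5 \<inter> CP5" CP5] by blast
  then show ?thesis
    using closed_CP5 by simp
qed

theorem lemma2p4:
  fixes A :: mat5
  assumes "A \<in> Sym5"
    and "frob A Horn = 0"
    and "A \<in> SymTop frontier_of CP5"
    and "A \<in> SymTop interior_of DNN5"
  shows "\<exists>y1 y2 y3 y4 y5 z1 z2 z3 z4 z5 :: real.
           0 < y1 \<and> 0 < y2 \<and> 0 < y3 \<and> 0 < y4 \<and> 0 < y5 \<and>
           0 < z1 \<and> 0 < z2 \<and> 0 < z3 \<and> 0 < z4 \<and> 0 < z5 \<and>
           (let B = Bmat y1 y2 y3 y4 y5 ** diag5 z1 z2 z3 z4 z5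
            in A = B ** transpose B)"
proof -
  have "A \<in> horn_face"
    using assms(2,3) SymTop_frontier_of_CP5 CP5_orthogonal_Horn_in_horn_face by blast
  then obtain \<alpha> \<beta> \<gamma> where A: "A = horn_face_matrix \<alpha> \<beta> \<gamma>"
    and face: "\<And>j. 0 \<le> \<alpha> j" "\<And>j. (\<beta> j)\<^sup>2 \<le> \<alpha> j * \<gamma> j"
    unfolding horn_face_def by blast
  have \<beta>_pos: "0 < \<beta> j" for j
    using DNN5_interior_entries_pos[OF assms(1,4), of j "j+2"] by (simp add: A horn_face_matrix_entry)
  have \<alpha>_pos: "0 < \<alpha> j" for j
    using face[of j] \<beta>_pos[of j] by (cases "\<alpha> j = 0") (simp_all add: less_le)
  obtain p where p_pos: "\<And>j. 0 < p j"
    and p_rec: "\<And>j. p (j+1) + (\<beta> j)\<^sup>2 / p j = \<alpha> (j+1) + \<gamma> j"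
    using cyclic_recurrence_solvable[of \<alpha> \<beta> \<gamma>, OF \<alpha>_pos face(2)] by blast
  have "A = horn_face_matrix p \<beta> (\<lambda>j. (\<beta> j)\<^sup>2 / p j)"
    unfolding A using p_rec by (intro horn_face_matrix_shift) simp
  then show ?thesis
    using horn_face_matrix_singular_factorization[OF p_pos \<beta>_pos] by (simp only:)
qed

end
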